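(* Let $\mathcal{F}=\coprod_{n\geq 0} \mathcal{F}_n$ be the scheme of pointed rational functions. Then the morphisms $\oplus^{\mathrm{N}}:\mathcal{F}_{n_1}\times\mathcal{F}_{n_2}\to\mathcal{F}_{n_1+n_2}$ define a graded monoid structure on $\mathcal{F}$: $$ \oplus^{\mathrm{N}}: \mathcal{F} \times \mathcal{F} \longrightarrow \mathcal{F}.$$
   Context: Let $k$ be a field. For $n\geq0$, $\mathcal{F}_n$ is the open subscheme of $\mathbf{A}^{2n}=\mathrm{Spec}\,k[a_0,\dots,a_{n-1},b_0,\dots,b_{n-1}]$ complementary to the hypersurface $\mathrm{res}_{n,n}(X^n+a_{n-1}X^{n-1}+\dots+a_0,\ b_{n-1}X^{n-1}+\dots+b_0)=0$. For a $k$-algebra $R$, an $R$-point $\frac AB$ is a pair with $A\in R[X]$ monic of degree $n$, $\deg B<n$, $\mathrm{res}_{n,n}(A,B)\in R^\times$; equivalently there is a unique Bézout relation $AU+BV=1$ with $\deg U\leq n-2$, $\deg V\leq n-1$. For $\frac{A_i}{B_i}\in\mathcal{F}_{n_i}(R)$ ($i=1,2$) with Bézout relations $A_iU_i+B_iV_i=1$, define $A_3,B_3,U_3,V_3$ by $\begin{bmatrix}A_3 & -V_3\\ B_3 & U_3\end{bmatrix} := \begin{bmatrix}A_1 & -V_1\\ B_1 & U_1\end{bmatrix}\begin{bmatrix}A_2 & -V_2\\ B_2 & U_2\end{bmatrix}$; then $A_3=A_1A_2-V_1B_2$ is monic of degree $n_1+n_2$, $\deg B_3<n_1+n_2$, $A_3U_3+B_3V_3=1$,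 and one sets $\frac{A_1}{B_1}\oplus^{\mathrm{N}}\frac{A_2}{B_2}:=\frac{A_3}{B_3}\in\mathcal{F}_{n_1+n_2}(R)$, natural in $R$. *)

theory Defs
  imports "Subresultants.Resultant_Prelim"
begin

definition res_nn :: "nat \<Rightarrow> 'a::comm_ring_1 poly \<Rightarrow> 'a poly \<Rightarrow> 'a" where
  "res_nn n A B = det (sylvester_mat_sub n n A B)"

text \<open>R-points of F_n: A monic of degree n, deg B < n, res_{n,n}(A,B) a unit.\<close>
definition Fpt :: "nat \<Rightarrow> 'a::comm_ring_1 poly \<times> 'a poly \<Rightarrow> bool" where
  "Fpt n AB \<longleftrightarrow> (let A = fst AB; B = snd AB in
     monic A \<and> degree A = n \<and> (B = 0 \<or> degree B < n) \<and> res_nn n A B dvd 1)"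

text \<open>The Bezout pair (U,V) with AU + BV = 1, deg U \<le> n-2, deg V \<le> n-1
  (for n \<le> 1 the bound on U is read as deg U \<le> 0; for n = 0 this forces U = 1, V = 0).\<close>
definition bezout_ok :: "nat \<Rightarrow> 'a::comm_ring_1 poly \<times> 'a poly \<Rightarrow> 'a poly \<times> 'a poly \<Rightarrow> bool" where
  "bezout_ok n AB UV \<longleftrightarrow>
     fst AB * fst UV + snd AB * snd UV = 1 \<and> degree (fst UV) \<le> n - 2 \<and>
     (snd UV = 0 \<or> degree (snd UV) < n)"

definition bezout_UV :: "'a::comm_ring_1 poly \<times> 'a poly \<Rightarrow> 'a poly \<times> 'a poly" where
  "bezout_UV AB = (THE UV. bezout_ok (degree (fst AB)) AB UV)"

text \<open>The operation: [A3 -V3; B3 U3] = [A1 -V1; B1 U1] [A2 -V2; B2 U2].\<close>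
definition oplusN :: "'a::comm_ring_1 poly \<times> 'a poly \<Rightarrow> 'a poly \<times> 'a poly \<Rightarrow> 'a poly \<times> 'a poly" where
  "oplusN AB1 AB2 = (let (A1, B1) = AB1; (A2, B2) = AB2; (U1, V1) = bezout_UV AB1 in
     (A1 * A2 - V1 * B2, B1 * A2 + U1 * B2))"

definition unitF :: "'a::comm_ring_1 poly \<times> 'a poly" where
  "unitF = (1, 0)"

end

theory Submission
  imports Defs
begin

text \<open>Because \<open>res\<^sub>n\<^sub>,\<^sub>n(A, B)\<close> is the determinant of the Sylvester map
  \<open>(U, V) \<mapsto> A U + B V\<close> from pairs of polynomials of degree \<open>< n\<close> to polynomials of degree
  \<open>< 2n\<close>, it is a unit exactly when this map is onto; for monic \<open>A\<close>, division by \<open>A\<close> shows that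
  this happens exactly when \<open>A U + B V = 1\<close> is solvable. So a point \<open>A/B\<close> of \<open>F\<^sub>n\<close> amounts to a
  matrix \<open>[A -V; B U]\<close> of determinant \<open>1\<close> whose entries satisfy the degree bounds, and the
  Bezout data \<open>(U, V)\<close> are unique. The product of two such matrices is again one, with degrees
  adding up; this gives closure under \<open>\<oplus>\<^sup>N\<close>, while associativity is that of matrix multiplication
  and the unit \<open>1/0\<close> is the identity matrix.\<close>

definition deg_less :: "nat \<Rightarrow> 'a::zero poly \<Rightarrow> bool" where
  "deg_less n p \<longleftrightarrow> (\<forall>i\<ge>n. coeff p i = 0)"

lemma deg_less_iff: "deg_less n p \<longleftrightarrow> p = 0 \<or> degree p < n"
proof
  assume "deg_less n p"
  then show "p = 0 \<or> degree p < n"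
    unfolding deg_less_def by (metis leading_coeff_0_iff not_le)
qed (auto simp: deg_less_def coeff_eq_0)

lemma deg_less_add: "deg_less n p \<Longrightarrow> deg_less n q \<Longrightarrow> deg_less n (p + q)"
  by (simp add: deg_less_def)

lemma deg_less_diff: "deg_less n p \<Longrightarrow> deg_less n q \<Longrightarrow> deg_less n (p - q)"
  by (simp add: deg_less_def)

lemma deg_less_mult:
  fixes p q :: "'a::comm_semiring_1 poly"
  assumes "deg_less m p" "deg_less n q" "m + n - 1 \<le> k"
  shows "deg_less k (p * q)"
proof (cases "p = 0 \<or> q = 0")
  case False
  then have "degree p < m" "degree q < n" using assms by (auto simp: deg_less_iff)
  then have "degree (p * q) < k" using degree_mult_le[of p q] assms(3) by linarith
  then show ?thesis by (simp add: deg_less_iff)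
qed (auto simp: deg_less_def)

lemma deg_less_monic_mult_cancel:
  fixes A U :: "'a::comm_semiring_1 poly"
  assumes "monic A" "deg_less (degree A + m) (A * U)"
  shows "deg_less m U"
proof (cases "U = 0")
  case False
  have "coeff (A * U) (degree A + degree U) = lead_coeff U"
    using coeff_mult_degree_sum[of A U] assms(1) by simp
  then have "\<not> degree A + m \<le> degree A + degree U"
    using assms(2) False unfolding deg_less_def by auto
  then show ?thesis by (simp add: deg_less_iff)
qed (simp add: deg_less_def)

lemma trivial_ring_poly_eq_0:
  assumes "(1::'a::comm_semiring_1) = 0"
  shows "(p::'a poly) = 0"
  by (rule poly_eqI) (metis assms coeff_0 mult_1 mult_zero_left)

lemma monic_mult_degree:
  fixes P Q :: "'a::comm_semiring_1 poly"
  assumes P: "monic P" and Q: "monic Q"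
  shows "monic (P * Q) \<and> degree (P * Q) = degree P + degree Q"
proof (cases "(1::'a) = 0")
  case True
  have "P = 0" "Q = 0" using True by (rule trivial_ring_poly_eq_0)+
  then show ?thesis using True by simp
next
  case False
  have c: "coeff (P * Q) (degree P + degree Q) = 1"
    using coeff_mult_degree_sum[of P Q] P Q by simp
  then have "degree P + degree Q \<le> degree (P * Q)" using False by (intro le_degree) simp
  then have "degree (P * Q) = degree P + degree Q" using degree_mult_le[of P Q] by simp
  then show ?thesis using c by simp
qed

lemma monic_diff_deg_less:
  fixes P Q :: "'a::comm_ring_1 poly"
  assumes P: "monic P" and Q: "deg_less (degree P) Q"
  shows "monic (P - Q) \<and> degree (P - Q) = degree P"
proof (cases "Q = 0")
  case False
  then have "degree (- Q) < degree P" using Q by (simp add: deg_less_iff)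
  then show ?thesis using P degree_add_eq_left[of "- Q" P] lead_coeff_add_le[of "- Q" P]
    by (simp add: add.commute)
qed (use P in simp)

lemma det_dvd_one_iff_solvable:
  fixes M :: "'a::comm_ring_1 mat"
  assumes M: "M \<in> carrier_mat n n"
  shows "det M dvd 1 \<longleftrightarrow> (\<forall>b\<in>carrier_vec n. \<exists>x\<in>carrier_vec n. M *\<^sub>v x = b)"
proof
  assume "det M dvd 1"
  then obtain c where c: "det M * c = 1" by (auto elim: dvdE)
  define X where "X = c \<cdot>\<^sub>m adj_mat M"
  have X: "X \<in> carrier_mat n n" using adj_mat(1)[OF M] by (simp add: X_def)
  have MX: "M * X = 1\<^sub>m n"
  proof -
    have "M * X = c \<cdot>\<^sub>m (det M \<cdot>\<^sub>m 1\<^sub>m n)"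
      unfolding X_def mult_smult_distrib[OF M adj_mat(1)[OF M]] adj_mat(2)[OF M] ..
    also have "\<dots> = 1\<^sub>m n" using c by (intro eq_matI) (auto simp: mult.commute)
    finally show ?thesis .
  qed
  show "\<forall>b\<in>carrier_vec n. \<exists>x\<in>carrier_vec n. M *\<^sub>v x = b"
  proof
    fix b :: "'a vec" assume b: "b \<in> carrier_vec n"
    have "M *\<^sub>v (X *\<^sub>v b) = (M * X) *\<^sub>v b" by (rule assoc_mult_mat_vec[OF M X b, symmetric])
    then have "M *\<^sub>v (X *\<^sub>v b) = b" using b by (simp add: MX)
    then show "\<exists>x\<in>carrier_vec n. M *\<^sub>v x = b" using X b by (intro bexI[of _ "X *\<^sub>v b"]) auto
  qed
next
  assume "\<forall>b\<in>carrier_vec n. \<exists>x\<in>carrier_vec n. M *\<^sub>v x = b"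
  then have "\<forall>j. \<exists>x. j < n \<longrightarrow> x \<in> carrier_vec n \<and> M *\<^sub>v x = unit_vec n j"
    using unit_vec_carrier by blast
  then obtain sol where sol: "\<And>j. j < n \<Longrightarrow> sol j \<in> carrier_vec n \<and> M *\<^sub>v sol j = unit_vec n j"
    by metis
  define X where "X = mat_of_cols n (map sol [0..<n])"
  have X: "X \<in> carrier_mat n n"
    using mat_of_cols_carrier(1)[of n "map sol [0..<n]"] by (simp add: X_def)
  have "M * X = 1\<^sub>m n"
  proof (rule mat_col_eqI)
    fix j assume "j < dim_col (1\<^sub>m n :: 'a mat)"
    then have j: "j < n" by simp
    have "col X j = sol j" using sol[OF j] j by (simp add: X_def)
    then have "col (M * X) j = unit_vec n j" using col_mult2[OF M X, of j] sol[OF j] j by simp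
    then show "col (M * X) j = col (1\<^sub>m n) j" using j by simp
  qed (use M X in auto)
  then have "det M * det X = 1" using det_mult[OF M X] by simp
  then show "det M dvd 1" by (metis dvdI)
qed

text \<open>Coefficients of degrees \<open>m - 1, \<dots>, 0\<close>, in the order in which they meet the rows of the
  Sylvester matrix.\<close>

definition coeff_vec :: "nat \<Rightarrow> 'a::zero poly \<Rightarrow> 'a vec" where
  "coeff_vec m p = vec m (\<lambda>j. coeff p (m - Suc j))"

lemma coeff_vec_carrier [simp]: "coeff_vec m p \<in> carrier_vec m"
  by (simp add: coeff_vec_def)

lemma coeff_vec_inj:
  assumes "deg_less m p" "deg_less m q" "coeff_vec m p = coeff_vec m q"
  shows "p = q"
proof (rule poly_eqI)
  fix i
  show "coeff p i = coeff q i"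
  proof (cases "i < m")
    case True
    have "coeff_vec m p $ (m - Suc i) = coeff_vec m q $ (m - Suc i)" using assms(3) by simp
    then show ?thesis using True by (simp add: coeff_vec_def)
  qed (use assms in \<open>simp add: deg_less_def\<close>)
qed

lemma coeff_vec_surj:
  fixes w :: "'a::comm_monoid_add vec"
  assumes "w \<in> carrier_vec m"
  shows "\<exists>p. deg_less m p \<and> coeff_vec m p = w"
proof -
  define p where "p = (\<Sum>d<m. monom (w $ (m - Suc d)) d)"
  have coeff_p: "coeff p d = (if d < m then w $ (m - Suc d) else 0)" for d
    by (simp add: p_def coeff_sum coeff_monom)
  have "deg_less m p" by (simp add: deg_less_def coeff_p)
  moreover have "coeff_vec m p = w" using assms by (intro eq_vecI) (auto simp: coeff_vec_def coeff_p)
  ultimately show ?thesis by blast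
qed

lemma sylvester_mat_sub_upper:
  fixes A B :: "'a::comm_semiring_1 poly"
  assumes "degree A \<le> m" "i < n" "j < m + n"
  shows "sylvester_mat_sub m n A B $$ (i, j) = coeff (monom 1 (n - Suc i) * A) (m + n - Suc j)"
proof (cases "j < i")
  case True
  then have "coeff A (m + n - Suc j - (n - Suc i)) = 0" using assms by (intro coeff_eq_0) auto
  then show ?thesis using assms True by (simp add: sylvester_mat_sub_index coeff_monom_mult)
next
  case False
  then show ?thesis using assms
    by (auto simp: sylvester_mat_sub_index coeff_monom_mult intro: arg_cong[where f = "coeff A"])
qed

lemma sylvester_mat_sub_lower:
  fixes A B :: "'a::comm_semiring_1 poly"
  assumes "degree B \<le> n" "k < m" "j < m + n"
  shows "sylvester_mat_sub m n A B $$ (n + k, j) = coeff (monom 1 (m - Suc k) * B) (m + n - Suc j)"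
proof (cases "j < k")
  case True
  then have "coeff B (m + n - Suc j - (m - Suc k)) = 0" using assms by (intro coeff_eq_0) auto
  then show ?thesis using assms True by (simp add: sylvester_mat_sub_index coeff_monom_mult)
next
  case False
  then show ?thesis using assms
    by (auto simp: sylvester_mat_sub_index coeff_monom_mult intro: arg_cong[where f = "coeff B"])
qed

lemma coeff_mult_reversed_sum:
  fixes A U :: "'a::comm_semiring_1 poly"
  assumes U: "deg_less n U"
  shows "(\<Sum>i<n. coeff (monom 1 (n - Suc i) * A) d * coeff U (n - Suc i)) = coeff (A * U) d"
proof -
  have "(\<Sum>i<n. coeff (monom 1 (n - Suc i) * A) d * coeff U (n - Suc i))
      = (\<Sum>t<n. coeff (monom 1 t * A) d * coeff U t)"
    by (rule sum.nat_diff_reindex)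
  also have "\<dots> = (\<Sum>t<n. if t \<le> d then coeff U t * coeff A (d - t) else 0)"
    by (intro sum.cong refl, simp only: coeff_monom_mult) (simp add: mult.commute)
  also have "\<dots> = (\<Sum>t\<in>{..<n} \<inter> {..d}. coeff U t * coeff A (d - t))"
    by (simp add: sum.inter_restrict)
  also have "\<dots> = (\<Sum>t\<le>d. coeff U t * coeff A (d - t))"
    using U by (intro sum.mono_neutral_left) (auto simp: deg_less_def not_less[symmetric])
  also have "\<dots> = coeff (A * U) d" by (simp add: coeff_mult mult.commute[of A])
  finally show ?thesis .
qed

lemma sylvester_mat_sub_action:
  fixes A B U V :: "'a::comm_ring_1 poly"
  assumes A: "degree A \<le> m" and B: "degree B \<le> n" and U: "deg_less n U" and V: "deg_less m V"
  shows "transpose_mat (sylvester_mat_sub m n A B) *\<^sub>v (coeff_vec n U @\<^sub>v coeff_vec m V)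
    = coeff_vec (m + n) (A * U + B * V)"
proof (rule eq_vecI)
  let ?S = "sylvester_mat_sub m n A B"
  fix j assume "j < dim_vec (coeff_vec (m + n) (A * U + B * V))"
  then have j: "j < m + n" by (simp add: coeff_vec_def)
  let ?d = "m + n - Suc j"
  have col: "col ?S j = vec n (\<lambda>i. ?S $$ (i, j)) @\<^sub>v vec m (\<lambda>k. ?S $$ (n + k, j))"
    using j by (intro eq_vecI) auto
  have upper: "vec n (\<lambda>i. ?S $$ (i, j)) \<bullet> coeff_vec n U = coeff (A * U) ?d"
    using A j coeff_mult_reversed_sum[OF U, of A ?d]
    by (simp add: scalar_prod_def coeff_vec_def atLeast0LessThan sylvester_mat_sub_upper)
  have lower: "vec m (\<lambda>k. ?S $$ (n + k, j)) \<bullet> coeff_vec m V = coeff (B * V) ?d"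
    using B j coeff_mult_reversed_sum[OF V, of B ?d]
    by (simp add: scalar_prod_def coeff_vec_def atLeast0LessThan sylvester_mat_sub_lower)
  have "(transpose_mat ?S *\<^sub>v (coeff_vec n U @\<^sub>v coeff_vec m V)) $ j
      = col ?S j \<bullet> (coeff_vec n U @\<^sub>v coeff_vec m V)"
    using j by simp
  also have "\<dots> = coeff (A * U + B * V) ?d"
    unfolding col by (subst scalar_prod_append[of _ n _ m]) (auto simp: upper lower)
  finally show "(transpose_mat ?S *\<^sub>v (coeff_vec n U @\<^sub>v coeff_vec m V)) $ j
      = coeff_vec (m + n) (A * U + B * V) $ j"
    using j by (simp add: coeff_vec_def)
qed (simp add: coeff_vec_def)

lemma deg_less_sylvester_combination:
  fixes A B U V :: "'a::comm_semiring_1 poly"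
  assumes "degree A \<le> m" "degree B \<le> n" "deg_less n U" "deg_less m V"
  shows "deg_less (m + n) (A * U + B * V)"
proof -
  have "deg_less (Suc m) A" "deg_less (Suc n) B" using assms(1,2) by (simp_all add: deg_less_iff)
  then show ?thesis using assms(3,4) by (intro deg_less_add deg_less_mult) auto
qed

theorem sylvester_det_dvd_one_iff:
  fixes A B :: "'a::comm_ring_1 poly"
  assumes A: "degree A \<le> m" and B: "degree B \<le> n"
  shows "det (sylvester_mat_sub m n A B) dvd 1 \<longleftrightarrow>
    (\<forall>C. deg_less (m + n) C \<longrightarrow> (\<exists>U V. deg_less n U \<and> deg_less m V \<and> A * U + B * V = C))"
    (is "_ \<longleftrightarrow> ?solvable")
proof -
  let ?M = "transpose_mat (sylvester_mat_sub m n A B)"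
  have M: "?M \<in> carrier_mat (m + n) (m + n)" by (simp add: carrier_matI)
  have "det ?M = det (sylvester_mat_sub m n A B)"
    by (rule det_transpose[OF sylvester_mat_sub_carrier])
  moreover have "(\<forall>b\<in>carrier_vec (m + n). \<exists>x\<in>carrier_vec (m + n). ?M *\<^sub>v x = b) \<longleftrightarrow> ?solvable"
  proof
    assume surj: "\<forall>b\<in>carrier_vec (m + n). \<exists>x\<in>carrier_vec (m + n). ?M *\<^sub>v x = b"
    show ?solvable
    proof (intro allI impI)
      fix C :: "'a poly" assume C: "deg_less (m + n) C"
      obtain x where "x \<in> carrier_vec (m + n)" and Mx: "?M *\<^sub>v x = coeff_vec (m + n) C"
        using surj coeff_vec_carrier by blast
      then have x: "x \<in> carrier_vec (n + m)" by (simp add: add.commute)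
      obtain U where U: "deg_less n U" "coeff_vec n U = vec_first x n"
        using coeff_vec_surj[OF vec_first_carrier] by blast
      obtain V where V: "deg_less m V" "coeff_vec m V = vec_last x m"
        using coeff_vec_surj[OF vec_last_carrier] by blast
      have "coeff_vec (m + n) (A * U + B * V) = coeff_vec (m + n) C"
        using sylvester_mat_sub_action[OF A B U(1) V(1)] Mx vec_first_last_append[OF x] U(2) V(2)
        by simp
      then have "A * U + B * V = C"
        using deg_less_sylvester_combination[OF A B U(1) V(1)] C by (intro coeff_vec_inj)
      then show "\<exists>U V. deg_less n U \<and> deg_less m V \<and> A * U + B * V = C"
        using U V by blast
    qed
  next
    assume sol: ?solvable
    show "\<forall>b\<in>carrier_vec (m + n). \<exists>x\<in>carrier_vec (m + n). ?M *\<^sub>v x = b"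
    proof
      fix b :: "'a vec" assume "b \<in> carrier_vec (m + n)"
      then obtain C where C: "deg_less (m + n) C" "coeff_vec (m + n) C = b"
        using coeff_vec_surj by blast
      then obtain U V where UV: "deg_less n U" "deg_less m V" "A * U + B * V = C"
        using sol by blast
      have "coeff_vec n U @\<^sub>v coeff_vec m V \<in> carrier_vec (n + m)" by simp
      then have "coeff_vec n U @\<^sub>v coeff_vec m V \<in> carrier_vec (m + n)" by (simp only: add.commute)
      moreover have "?M *\<^sub>v (coeff_vec n U @\<^sub>v coeff_vec m V) = b"
        using sylvester_mat_sub_action[OF A B UV(1,2)] UV(3) C(2) by simp
      ultimately show "\<exists>x\<in>carrier_vec (m + n). ?M *\<^sub>v x = b" by blast
    qed
  qed
  ultimately show ?thesis using det_dvd_one_iff_solvable[OF M] by simp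
qed

lemma bezout_reduce:
  fixes A B U V C :: "'a::comm_ring_1 poly"
  assumes A: "monic A" and eq: "A * U + B * V = C"
  shows "\<exists>U' V'. A * U' + B * V' = C \<and> deg_less (degree A) V'"
proof (cases "A = 0")
  case True
  then have "(1::'a) = 0" using A by simp
  then have "V = 0" by (rule trivial_ring_poly_eq_0)
  then show ?thesis using eq by (intro exI[of _ U] exI[of _ V]) (simp add: deg_less_def)
next
  case False
  obtain q r where qr: "pseudo_divmod V A = (q, r)" by (cases "pseudo_divmod V A")
  \<comment> \<open>pseudo-division by a monic polynomial is exact division\<close>
  from pseudo_divmod[OF False qr] A have V: "V = A * q + r" and r: "r = 0 \<or> degree r < degree A"
    by auto
  have "A * (U + q * B) + B * r = C" using eq unfolding V by (simp add: algebra_simps)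
  then show ?thesis using r by (auto simp: deg_less_iff)
qed

lemma res_nn_dvd_one_iff:
  fixes A B :: "'a::comm_ring_1 poly"
  assumes A: "monic A" "degree A = n" and B: "deg_less n B"
  shows "res_nn n A B dvd 1 \<longleftrightarrow> (\<exists>U V. A * U + B * V = 1)"
proof -
  have dB: "degree B \<le> n" using B by (auto simp: deg_less_iff)
  note sylvester = sylvester_det_dvd_one_iff[OF eq_imp_le[OF A(2)] dB, folded res_nn_def]
  show ?thesis
  proof
    assume res: "res_nn n A B dvd 1"
    show "\<exists>U V. A * U + B * V = 1"
    proof (cases "n = 0")
      case True
      then have "A = 1" using monic_degree_0[OF A(1)] A(2) by simp
      then have "A * 1 + B * 0 = 1" by simp
      then show ?thesis by blast
    next
      case False
      then have "deg_less (n + n) 1" by (simp add: deg_less_iff)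
      moreover have "\<forall>C. deg_less (n + n) C \<longrightarrow> (\<exists>U V. deg_less n U \<and> deg_less n V \<and> A * U + B * V = C)"
        using res unfolding sylvester .
      ultimately show ?thesis by blast
    qed
  next
    assume "\<exists>U V. A * U + B * V = 1"
    then obtain U0 V0 where bez: "A * U0 + B * V0 = 1" by blast
    have "\<exists>U V. deg_less n U \<and> deg_less n V \<and> A * U + B * V = C" if C: "deg_less (n + n) C" for C
    proof -
      have "A * (U0 * C) + B * (V0 * C) = (A * U0 + B * V0) * C" by (simp add: algebra_simps)
      then have "A * (U0 * C) + B * (V0 * C) = C" by (simp add: bez)
      then obtain U V where UV: "A * U + B * V = C" and V: "deg_less n V"
        using bezout_reduce[OF A(1)] unfolding A(2) by blast
      have "deg_less (n + n) (C - B * V)"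
        using C deg_less_mult[OF B V] by (intro deg_less_diff) auto
      moreover have "A * U = C - B * V" using UV by (simp add: eq_diff_eq)
      ultimately have "deg_less (degree A + n) (A * U)" using A(2) by simp
      then have "deg_less n U" by (rule deg_less_monic_mult_cancel[OF A(1)])
      then show ?thesis using UV V by blast
    qed
    then show "res_nn n A B dvd 1" unfolding sylvester by blast
  qed
qed

lemma Fpt_iff: "Fpt n (A, B) \<longleftrightarrow> monic A \<and> degree A = n \<and> deg_less n B \<and> res_nn n A B dvd 1"
  by (simp add: Fpt_def deg_less_iff)

lemma bezout_ok_iff:
  "bezout_ok n (A, B) (U, V) \<longleftrightarrow> A * U + B * V = 1 \<and> deg_less (max 1 (n - 1)) U \<and> deg_less n V"
proof -
  have "degree U \<le> n - 2 \<longleftrightarrow> deg_less (max 1 (n - 1)) U"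
    by (cases "U = 0") (auto simp: deg_less_iff)
  then show ?thesis by (simp add: bezout_ok_def deg_less_iff)
qed

lemma bezout_ok_exists:
  fixes A B U V :: "'a::comm_ring_1 poly"
  assumes A: "monic A" "degree A = n" and B: "deg_less n B" and bez: "A * U + B * V = 1"
  shows "\<exists>UV. bezout_ok n (A, B) UV"
proof -
  obtain U' V' where UV': "A * U' + B * V' = 1" and V': "deg_less n V'"
    using bezout_reduce[OF A(1) bez] unfolding A(2) by blast
  have "deg_less (n + max 1 (n - 1)) (1 - B * V')"
    using deg_less_mult[OF B V'] by (intro deg_less_diff) (auto simp: deg_less_iff)
  moreover have "A * U' = 1 - B * V'" using UV' by (simp add: eq_diff_eq)
  ultimately have "deg_less (max 1 (n - 1)) U'"
    using deg_less_monic_mult_cancel[OF A(1)] A(2) by simp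
  then have "bezout_ok n (A, B) (U', V')" using UV' V' by (simp add: bezout_ok_iff)
  then show ?thesis by blast
qed

lemma Fpt_iff_bezout_ok:
  "Fpt n (A, B) \<longleftrightarrow> monic A \<and> degree A = n \<and> deg_less n B \<and> (\<exists>UV. bezout_ok n (A, B) UV)"
proof
  assume "Fpt n (A, B)"
  then have A: "monic A" "degree A = n" and B: "deg_less n B" and "res_nn n A B dvd 1"
    unfolding Fpt_iff by blast+
  then obtain U V where "A * U + B * V = 1" using res_nn_dvd_one_iff by blast
  then show "monic A \<and> degree A = n \<and> deg_less n B \<and> (\<exists>UV. bezout_ok n (A, B) UV)"
    using bezout_ok_exists[OF A B] A B by blast
next
  assume pt: "monic A \<and> degree A = n \<and> deg_less n B \<and> (\<exists>UV. bezout_ok n (A, B) UV)"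
  then obtain U V where "bezout_ok n (A, B) (U, V)" by (metis surj_pair)
  then have "A * U + B * V = 1" by (simp add: bezout_ok_iff)
  then have "res_nn n A B dvd 1" using res_nn_dvd_one_iff pt by blast
  then show "Fpt n (A, B)" using pt unfolding Fpt_iff by blast
qed

lemma bezout_ok_unique:
  fixes A B :: "'a::comm_ring_1 poly"
  assumes A: "monic A" "degree A = n"
    and UV: "bezout_ok n (A, B) (U, V)" and UV': "bezout_ok n (A, B) (U', V')"
  shows "U = U' \<and> V = V'"
proof -
  from UV UV' have bez: "A * U + B * V = 1" and bez': "A * U' + B * V' = 1"
    and V: "deg_less n V" and V': "deg_less n V'"
    by (simp_all add: bezout_ok_iff)
  define D where "D = V' - V"
  have BD: "B * D = A * (U - U')"
  proof -
    have "B * D = (A * U' + B * V') - (A * U + B * V) + A * (U - U')"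
      by (simp add: D_def algebra_simps)
    then show ?thesis by (simp add: bez bez')
  qed
  define W where "W = U * D + V * (U - U')"
  have "D = D * (A * U + B * V)" by (simp add: bez)
  also have "\<dots> = A * (U * D) + V * (B * D)" by (simp add: algebra_simps)
  also have "\<dots> = A * W" by (simp add: W_def BD algebra_simps)
  finally have DW: "D = A * W" .
  have "deg_less (degree A + 0) (A * W)"
    using deg_less_diff[OF V' V] A(2) DW by (simp add: D_def)
  then have "deg_less 0 W" by (rule deg_less_monic_mult_cancel[OF A(1)])
  then have D0: "D = 0" using DW by (simp add: deg_less_iff)
  then have "deg_less (degree A + 0) (A * (U - U'))" using BD by (simp add: deg_less_def)
  then have "deg_less 0 (U - U')" by (rule deg_less_monic_mult_cancel[OF A(1)])
  then have "U = U'" by (simp add: deg_less_iff)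
  then show ?thesis using D0 by (simp add: D_def)
qed

lemma bezout_UV_eq:
  assumes F: "Fpt n (A, B)" and UV: "bezout_ok n (A, B) UV"
  shows "bezout_UV (A, B) = UV"
proof -
  have A: "monic A" "degree A = n" using F unfolding Fpt_iff by blast+
  show ?thesis unfolding bezout_UV_def fst_conv A(2)
  proof (rule the_equality)
    fix UV' assume "bezout_ok n (A, B) UV'"
    then show "UV' = UV" using bezout_ok_unique[OF A] UV by (cases UV, cases UV') blast
  qed (rule UV)
qed

lemma bezout_UV_ok: "Fpt n (A, B) \<Longrightarrow> bezout_ok n (A, B) (bezout_UV (A, B))"
  using Fpt_iff_bezout_ok bezout_UV_eq by metis

lemma Fpt_bezout_ok_mult:
  fixes A1 B1 U1 V1 A2 B2 U2 V2 :: "'a::comm_ring_1 poly"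
  assumes F1: "Fpt n1 (A1, B1)" and UV1: "bezout_ok n1 (A1, B1) (U1, V1)"
    and F2: "Fpt n2 (A2, B2)" and UV2: "bezout_ok n2 (A2, B2) (U2, V2)"
  defines "A \<equiv> A1 * A2 - V1 * B2" and "B \<equiv> B1 * A2 + U1 * B2"
    and "U \<equiv> U1 * U2 - B1 * V2" and "V \<equiv> A1 * V2 + V1 * U2"
  shows "Fpt (n1 + n2) (A, B) \<and> bezout_ok (n1 + n2) (A, B) (U, V)"
proof -
  from F1 UV1 have mA1: "monic A1" and dA1: "degree A1 = n1" and B1: "deg_less n1 B1"
    and bez1: "A1 * U1 + B1 * V1 = 1" and U1: "deg_less (max 1 (n1 - 1)) U1" and V1: "deg_less n1 V1"
    unfolding Fpt_iff bezout_ok_iff by blast+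
  from F2 UV2 have mA2: "monic A2" and dA2: "degree A2 = n2" and B2: "deg_less n2 B2"
    and bez2: "A2 * U2 + B2 * V2 = 1" and U2: "deg_less (max 1 (n2 - 1)) U2" and V2: "deg_less n2 V2"
    unfolding Fpt_iff bezout_ok_iff by blast+
  have A1: "deg_less (Suc n1) A1" and A2: "deg_less (Suc n2) A2"
    using dA1 dA2 by (simp_all add: deg_less_iff)
  have prod: "monic (A1 * A2)" "degree (A1 * A2) = n1 + n2"
    using monic_mult_degree[OF mA1 mA2] dA1 dA2 by blast+
  have "deg_less (degree (A1 * A2)) (V1 * B2)" using deg_less_mult[OF V1 B2] prod(2) by simp
  then have "monic A \<and> degree A = degree (A1 * A2)"
    unfolding A_def by (rule monic_diff_deg_less[OF prod(1)])
  then have mA: "monic A" and dA: "degree A = n1 + n2" using prod(2) by (blast, simp)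
  have B: "deg_less (n1 + n2) B" unfolding B_def
    using deg_less_mult[OF B1 A2] deg_less_mult[OF U1 B2] by (intro deg_less_add) auto
  have U: "deg_less (max 1 (n1 + n2 - 1)) U" unfolding U_def
    using deg_less_mult[OF U1 U2] deg_less_mult[OF B1 V2] by (intro deg_less_diff) auto
  have V: "deg_less (n1 + n2) V" unfolding V_def
    using deg_less_mult[OF A1 V2] deg_less_mult[OF V1 U2] by (intro deg_less_add) auto
  \<comment> \<open>\<open>A U + B V\<close> is the determinant of \<open>[A -V; B U]\<close>, which is multiplicative\<close>
  have "A * U + B * V = (A1 * U1 + B1 * V1) * (A2 * U2 + B2 * V2)"
    by (simp add: A_def B_def U_def V_def algebra_simps)
  then have "bezout_ok (n1 + n2) (A, B) (U, V)"
    using bez1 bez2 U V by (simp add: bezout_ok_iff)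
  then show ?thesis using mA dA B Fpt_iff_bezout_ok by blast
qed

lemma oplusN_eq: "bezout_UV (A1, B1) = (U1, V1) \<Longrightarrow>
    oplusN (A1, B1) (A2, B2) = (A1 * A2 - V1 * B2, B1 * A2 + U1 * B2)"
  by (simp add: oplusN_def)

lemma oplusN_Fpt_bezout_UV:
  fixes A1 B1 A2 B2 :: "'a::comm_ring_1 poly"
  assumes F1: "Fpt n1 (A1, B1)" and F2: "Fpt n2 (A2, B2)"
    and UV1: "bezout_UV (A1, B1) = (U1, V1)" and UV2: "bezout_UV (A2, B2) = (U2, V2)"
  shows "Fpt (n1 + n2) (oplusN (A1, B1) (A2, B2))"
    and "bezout_UV (oplusN (A1, B1) (A2, B2)) = (U1 * U2 - B1 * V2, A1 * V2 + V1 * U2)"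
proof -
  have "Fpt (n1 + n2) (A1 * A2 - V1 * B2, B1 * A2 + U1 * B2) \<and>
      bezout_ok (n1 + n2) (A1 * A2 - V1 * B2, B1 * A2 + U1 * B2) (U1 * U2 - B1 * V2, A1 * V2 + V1 * U2)"
    using Fpt_bezout_ok_mult[OF F1 _ F2] bezout_UV_ok[OF F1] bezout_UV_ok[OF F2] UV1 UV2 by simp
  then show "Fpt (n1 + n2) (oplusN (A1, B1) (A2, B2))"
    and "bezout_UV (oplusN (A1, B1) (A2, B2)) = (U1 * U2 - B1 * V2, A1 * V2 + V1 * U2)"
    using bezout_UV_eq oplusN_eq[OF UV1] by auto
qed

lemma oplusN_Fpt: "Fpt n1 p \<Longrightarrow> Fpt n2 q \<Longrightarrow> Fpt (n1 + n2) (oplusN p q)"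
  by (metis oplusN_Fpt_bezout_UV(1) surj_pair)

lemma Fpt_unitF: "Fpt 0 unitF"
  unfolding unitF_def Fpt_iff_bezout_ok
  by (intro conjI exI[of _ "(1, 0)"]) (simp_all add: bezout_ok_def deg_less_def)

lemma oplusN_unitF_left: "oplusN unitF p = p"
proof -
  have unit: "bezout_UV (1, 0) = (1, 0)"
    using Fpt_unitF unfolding unitF_def by (rule bezout_UV_eq) (simp add: bezout_ok_def)
  show ?thesis by (cases p) (simp add: unitF_def oplusN_eq[OF unit])
qed

lemma oplusN_unitF_right: "oplusN p unitF = p"
  by (cases p, cases "bezout_UV p") (simp add: unitF_def oplusN_eq)

lemma oplusN_assoc:
  assumes F1: "Fpt n1 p" and F2: "Fpt n2 q"
  shows "oplusN (oplusN p q) r = oplusN p (oplusN q r)"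
proof -
  obtain A1 B1 A2 B2 A3 B3 where pqr: "p = (A1, B1)" "q = (A2, B2)" "r = (A3, B3)"
    by (metis surj_pair)
  obtain U1 V1 U2 V2 where UV1: "bezout_UV (A1, B1) = (U1, V1)" and UV2: "bezout_UV (A2, B2) = (U2, V2)"
    by (metis surj_pair)
  note UV12 = oplusN_Fpt_bezout_UV(2)[OF F1[unfolded pqr] F2[unfolded pqr] UV1 UV2]
  have "oplusN (oplusN p q) r = oplusN (A1 * A2 - V1 * B2, B1 * A2 + U1 * B2) (A3, B3)"
    by (simp add: pqr oplusN_eq[OF UV1])
  also have "\<dots> = ((A1 * A2 - V1 * B2) * A3 - (A1 * V2 + V1 * U2) * B3,
      (B1 * A2 + U1 * B2) * A3 + (U1 * U2 - B1 * V2) * B3)"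
    by (rule oplusN_eq[OF UV12[unfolded oplusN_eq[OF UV1]]])
  also have "\<dots> = (A1 * (A2 * A3 - V2 * B3) - V1 * (B2 * A3 + U2 * B3),
      B1 * (A2 * A3 - V2 * B3) + U1 * (B2 * A3 + U2 * B3))"
    by (simp add: algebra_simps)
  also have "\<dots> = oplusN p (oplusN q r)"
    by (simp add: pqr oplusN_eq[OF UV1] oplusN_eq[OF UV2])
  finally show ?thesis .
qed

theorem proposition3p1:
  fixes \<iota> :: "'k::field \<Rightarrow> 'r::comm_ring_1"
  assumes "\<iota> 1 = 1" "\<And>x y. \<iota> (x + y) = \<iota> x + \<iota> y" "\<And>x y. \<iota> (x * y) = \<iota> x * \<iota> y"
  shows "(\<forall>n1 n2 (p::'r poly \<times> 'r poly) q. Fpt n1 p \<longrightarrow> Fpt n2 q \<longrightarrow> Fpt (n1 + n2) (oplusN p q))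
    \<and> Fpt 0 (unitF :: 'r poly \<times> 'r poly)
    \<and> (\<forall>n (p::'r poly \<times> 'r poly). Fpt n p \<longrightarrow> oplusN unitF p = p \<and> oplusN p unitF = p)
    \<and> (\<forall>n1 n2 n3 (p::'r poly \<times> 'r poly) q r. Fpt n1 p \<longrightarrow> Fpt n2 q \<longrightarrow> Fpt n3 r \<longrightarrow>
          oplusN (oplusN p q) r = oplusN p (oplusN q r))"
  using oplusN_Fpt Fpt_unitF oplusN_unitF_left oplusN_unitF_right oplusN_assoc by blast

end
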